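(* For integers $N\ge 2$ and $n\ge 1$, $$B_{N,n}=\frac{N}{N+n}\left\{\sum_{m=0}^{n-1}\ \sum_{1\le i_m<\cdots<i_1<i_0=n}B_{N-1,i_m}\prod_{k=1}^{m}B_{N-1,\,i_{k-1}-i_k+1}\binom{i_{k-1}}{i_{k-1}-i_k+1}\frac{N}{N+i_k}\right\},$$ where for each $m$ the inner sum runs over all integers $i_1,\dots,i_m$ with $1\le i_m<\cdots<i_1<i_0=n$ (for $m=0$ the inner sum consists of the single term $B_{N-1,n}$, the empty product being $1$).
   Context: For a positive integer $N$, the hypergeometric Bernoulli numbers $B_{N,n}$ ($n\ge 0$) are defined by $$\frac{x^N/N!}{e^x-\sum_{n=0}^{N-1}x^n/n!}=\sum_{n=0}^\infty B_{N,n}\frac{x^n}{n!}.$$ *)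

theory Defs
  imports "HOL-Computational_Algebra.Formal_Power_Series"
begin

definition hb_gf :: "nat \<Rightarrow> real fps" where
  "hb_gf N = (fps_X ^ N / fps_const (fact N)) /
             (fps_exp 1 - (\<Sum>n<N. fps_const (1 / fact n) * fps_X ^ n))"

definition hyp_bernoulli :: "nat \<Rightarrow> nat \<Rightarrow> real" where
  "hyp_bernoulli N n = fact n * fps_nth (hb_gf N) n"

text \<open>Chains n = i_0 > i_1 > ... > i_m >= 1, encoded as functions nat => nat
  that vanish beyond index m.\<close>
definition chains :: "nat \<Rightarrow> nat \<Rightarrow> (nat \<Rightarrow> nat) set" where
  "chains n m = {i. i 0 = n \<and> (\<forall>k<m. i (Suc k) < i k) \<and> 1 \<le> i m \<and> (\<forall>k>m. i k = 0)}"

end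

theory Submission
  imports Defs
begin

(* With the exponential tails E_N = \<Sum>k. x^k / (N + k)!, the denominator of the generating
   function is x^N E_N, so G_N E_N = 1 / N!.  The tails satisfy E_(N-1) = 1/(N-1)! + x E_N and
   x E_N' = E_(N-1) - N E_N; eliminating them from G_N E_N = 1/N! and G_(N-1) E_(N-1) = 1/(N-1)!
   gives the differential relation N G_N + x G_N' = N G_(N-1) + G_N' (N G_(N-1) - N + x).
   Comparing coefficients, f n = (N + n) B_(N,n) / N obeys a triangular linear recurrence
   f n = B_(N-1,n) + \<Sum>(0<j<n). w n j f j, and unrolling such a recurrence sums the products of
   the weights along all descending chains n = i_0 > i_1 > ... > i_m \<ge> 1. *)

unbundle fps_syntax

definition exp_tail :: "nat \<Rightarrow> real fps" where
  "exp_tail N = Abs_fps (\<lambda>k. 1 / fact (N + k))"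

lemma exp_tail_nth [simp]: "exp_tail N $ k = 1 / fact (N + k)"
  by (simp add: exp_tail_def)

lemma exp_tail_nonzero: "exp_tail N \<noteq> 0"
  by (metis exp_tail_nth fps_zero_nth divide_eq_0_iff fact_nonzero zero_neq_one)

lemma fps_exp_minus_partial_sum:
  "fps_exp 1 - (\<Sum>n<N. fps_const (1 / fact n) * fps_X ^ n) = fps_X ^ N * exp_tail N"
proof (rule fps_ext)
  fix k
  have "(\<Sum>n<N. fps_const (1 / fact n) * fps_X ^ n) $ k = (if k < N then 1 / fact k else (0::real))"
    by (simp add: fps_sum_nth if_distrib sum.delta cong: if_cong)
  then show "(fps_exp 1 - (\<Sum>n<N. fps_const (1 / fact n) * fps_X ^ n)) $ k = (fps_X ^ N * exp_tail N) $ k"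
    by (simp add: fps_X_power_mult_nth)
qed

lemma hb_gf_mult_exp_tail: "hb_gf N * exp_tail N = fps_const (1 / fact N)"
proof -
  let ?P = "exp_tail N" and ?c = "fps_const (1 / fact N) :: real fps"
  have "fps_X ^ N / fps_const (fact N) = fps_X ^ N * ?c"
    by (simp add: fps_divide_unit fps_const_inverse divide_inverse)
  moreover have "fps_X ^ N * ?P dvd fps_X ^ N * ?c"
  proof
    show "fps_X ^ N * ?c = fps_X ^ N * ?P * (inverse ?P * ?c)"
      using inverse_mult_eq_1'[of ?P] by (simp add: algebra_simps)
  qed
  ultimately have "hb_gf N * (fps_X ^ N * ?P) = fps_X ^ N * ?c"
    unfolding hb_gf_def fps_exp_minus_partial_sum by (simp add: dvd_div_mult_self)
  then show ?thesis by (simp add: algebra_simps)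
qed

lemma exp_tail_shift: "exp_tail M = fps_const (1 / fact M) + fps_X * exp_tail (Suc M)"
  by (rule fps_ext) (simp add: fps_X_mult_nth)

lemma exp_tail_deriv:
  "fps_X * fps_deriv (exp_tail (Suc M)) = exp_tail M - of_nat (Suc M) * exp_tail (Suc M)"
proof (rule fps_ext)
  fix k
  show "(fps_X * fps_deriv (exp_tail (Suc M))) $ k = (exp_tail M - of_nat (Suc M) * exp_tail (Suc M)) $ k"
  proof (cases k)
    case 0
    have "real (Suc M) / fact (Suc M) = (1 / fact M :: real)"
      by (simp del: of_nat_Suc)
    with 0 show ?thesis by (simp add: fps_X_mult_nth fps_of_nat[symmetric] del: of_nat_Suc fact_Suc)
  next
    case (Suc j)
    define F :: real where "F = fact (M + Suc j)"
    have F: "F > 0" by (simp add: F_def)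
    have "fact (Suc M + Suc j) = (2 + (real M + real j)) * F"
      by (simp add: F_def algebra_simps)
    moreover have "real (Suc j) / ((2 + (real M + real j)) * F) =
        1 / F - real (Suc M) / ((2 + (real M + real j)) * F)"
      using F by (simp add: divide_simps)
    ultimately show ?thesis using Suc by (simp add: fps_X_mult_nth fps_of_nat[symmetric] F_def)
  qed
qed

lemma hb_gf_ode:
  fixes M :: nat
  defines "G \<equiv> hb_gf (Suc M)" and "H \<equiv> hb_gf M" and "n \<equiv> of_nat (Suc M) :: real fps"
  shows "n * G + fps_X * fps_deriv G = n * H + fps_deriv G * (n * H - n + fps_X)"
proof -
  define P where "P = exp_tail (Suc M)"
  define Q where "Q = exp_tail M"
  define c where "c = fps_const (1 / fact (Suc M) :: real)"
  have fact_M: "fps_const (1 / fact M :: real) = n * c"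
    by (simp add: n_def c_def fps_of_nat[symmetric] fps_const_mult[symmetric] field_simps del: of_nat_Suc)
  have GP: "G * P = c"
    unfolding G_def P_def c_def by (rule hb_gf_mult_exp_tail)
  have HQ: "H * Q = n * c"
    unfolding H_def Q_def fact_M[symmetric] by (rule hb_gf_mult_exp_tail)
  have Q: "Q = n * c + fps_X * P"
    unfolding Q_def P_def fact_M[symmetric] by (rule exp_tail_shift)
  have P': "fps_X * fps_deriv P = Q - n * P"
    unfolding P_def Q_def n_def by (rule exp_tail_deriv)
  have "fps_deriv G * P + G * fps_deriv P = 0"
    using arg_cong[OF GP, of fps_deriv] by (simp add: c_def algebra_simps)
  then have G': "fps_X * fps_deriv G * P = - (G * (Q - n * P))"
    by (metis P' add_eq_0_iff2 minus_mult_right mult.assoc mult.left_commute)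
  (* After multiplication by P * P * Q both sides reduce to c * Q * (2 * n * P - Q). *)
  have "(n * G + fps_X * fps_deriv G) * (P * P * Q) = n * (G * P) * P * Q + (fps_X * fps_deriv G * P) * P * Q"
    by (simp add: algebra_simps)
  also have "\<dots> = n * (G * P) * P * Q - (G * P) * (Q - n * P) * Q"
    unfolding G' by (simp add: algebra_simps)
  also have "\<dots> = c * Q * (2 * n * P - Q)"
    unfolding GP by (simp add: algebra_simps)
  finally have lhs: "(n * G + fps_X * fps_deriv G) * (P * P * Q) = c * Q * (2 * n * P - Q)" .
  have W: "(n * H - n + fps_X) * Q = fps_X * (Q - n * P)"
  proof -
    have "(n * H - n + fps_X) * Q = n * (H * Q) - n * Q + fps_X * Q"
      by (simp add: algebra_simps)
    also have "\<dots> = fps_X * (Q - n * P)"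
      unfolding HQ by (simp add: Q algebra_simps)
    finally show ?thesis .
  qed
  have "(n * H + fps_deriv G * (n * H - n + fps_X)) * (P * P * Q) =
      n * (H * Q) * P * P + fps_deriv G * P * P * ((n * H - n + fps_X) * Q)"
    by (simp add: algebra_simps)
  also have "\<dots> = n * (n * c) * P * P + (fps_X * fps_deriv G * P) * P * (Q - n * P)"
    unfolding HQ W by (simp add: algebra_simps)
  also have "\<dots> = n * n * c * P * P - (G * P) * (Q - n * P) * (Q - n * P)"
    unfolding G' by (simp add: algebra_simps)
  also have "\<dots> = c * Q * (2 * n * P - Q)"
    unfolding GP by (simp add: algebra_simps)
  finally have rhs: "(n * H + fps_deriv G * (n * H - n + fps_X)) * (P * P * Q) = c * Q * (2 * n * P - Q)" .
  moreover have "P * P * Q \<noteq> 0"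
    by (simp add: P_def Q_def exp_tail_nonzero)
  ultimately show ?thesis
    using lhs mult_right_cancel by metis
qed

lemma hb_gf_nth_0 [simp]: "hb_gf M $ 0 = 1"
  using arg_cong[OF hb_gf_mult_exp_tail[of M], of "\<lambda>f. f $ 0"] by (simp add: fps_mult_nth)

lemma hb_gf_nth_1: "hb_gf M $ 1 = - 1 / real (Suc M)"
proof -
  have "hb_gf M $ 0 * (1 / fact (Suc M)) + hb_gf M $ 1 * (1 / fact M) = (0::real)"
    using arg_cong[OF hb_gf_mult_exp_tail[of M], of "\<lambda>f. f $ 1"] by (simp add: fps_mult_nth)
  then have "hb_gf M $ 1 = - fact M / fact (Suc M)"
    by (simp add: field_simps del: fact_Suc)
  also have "\<dots> = - 1 / real (Suc M)"
    by (simp del: of_nat_Suc)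
  finally show ?thesis .
qed

lemma hb_gf_nth_rec:
  fixes M n :: nat
  defines "G \<equiv> hb_gf (Suc M)" and "H \<equiv> hb_gf M" and "N \<equiv> real (Suc M)"
  shows "(N + real n) * G $ n = N * H $ n + N * (\<Sum>i\<in>{1..<n}. real i * G $ i * H $ (n + 1 - i))"
proof (cases n)
  case 0
  then show ?thesis by (simp add: G_def H_def)
next
  case (Suc p)
  define W where "W = of_nat (Suc M) * H - of_nat (Suc M) + (fps_X :: real fps)"
  have "real (Suc M) * H $ Suc 0 = -1"
    using hb_gf_nth_1[of M] by (simp add: H_def del: of_nat_Suc)
  then have W0: "W $ 0 = 0" and W1: "W $ 1 = 0"
    by (simp_all add: W_def H_def fps_of_nat[symmetric] del: of_nat_Suc)
  have W2: "W $ k = N * H $ k" if "k \<ge> 2" for k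
    using that by (simp add: W_def N_def fps_of_nat[symmetric] fps_X_nth del: of_nat_Suc)
  have "(fps_deriv G * W) $ n = (\<Sum>i<Suc (Suc p). fps_deriv G $ i * W $ (Suc p - i))"
    unfolding Suc fps_mult_nth atLeast0AtMost lessThan_Suc_atMost ..
  also have "\<dots> = (\<Sum>i<p. fps_deriv G $ i * W $ (Suc p - i))"
    using W0 W1 by simp
  also have "\<dots> = N * (\<Sum>i<p. real (Suc i) * G $ Suc i * H $ (Suc p - i))"
    unfolding sum_distrib_left by (rule sum.cong) (auto simp: W2)
  also have "(\<Sum>i<p. real (Suc i) * G $ Suc i * H $ (Suc p - i)) =
      (\<Sum>i\<in>{1..<n}. real i * G $ i * H $ (n + 1 - i))"
    unfolding Suc lessThan_atLeast0 One_nat_def sum.shift_bounds_Suc_ivl by simp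
  finally have "(fps_deriv G * W) $ n = N * (\<Sum>i\<in>{1..<n}. real i * G $ i * H $ (n + 1 - i))" .
  moreover have "(of_nat (Suc M) * G + fps_X * fps_deriv G) $ n = (of_nat (Suc M) * H + fps_deriv G * W) $ n"
    using hb_gf_ode[of M] unfolding G_def H_def W_def by simp
  ultimately show ?thesis
    using Suc by (simp add: N_def fps_of_nat[symmetric] fps_X_mult_nth algebra_simps del: of_nat_Suc)
qed

lemma fact_mult_eq_fact_choose:
  assumes "1 \<le> i" "i \<le> n"
  shows "fact n * real i = fact (n - i + 1) * real (n choose (n - i + 1)) * fact i"
proof -
  obtain j where j: "i = Suc j"
    using assms(1) by (cases i) auto
  have "n - i + 1 \<le> n" "n - (n - i + 1) = j"
    using assms j by auto
  then have "fact (n - i + 1) * fact j * (n choose (n - i + 1)) = fact n"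
    using binomial_fact_lemma by metis
  then have "fact n = fact (n - i + 1) * fact j * real (n choose (n - i + 1))"
    by (metis of_nat_fact of_nat_mult)
  then show ?thesis
    by (simp add: j algebra_simps)
qed

lemma hyp_bernoulli_rec:
  "hyp_bernoulli (Suc M) n = real (Suc M) / real (Suc M + n) *
     (hyp_bernoulli M n + (\<Sum>i\<in>{1..<n}. hyp_bernoulli M (n - i + 1) *
        real (n choose (n - i + 1)) * hyp_bernoulli (Suc M) i))"
proof -
  define G where "G = hb_gf (Suc M)"
  define H where "H = hb_gf M"
  define S where "S = (\<Sum>i\<in>{1..<n}. real i * G $ i * H $ (n + 1 - i))"
  have sum: "fact n * S =
      (\<Sum>i\<in>{1..<n}. hyp_bernoulli M (n - i + 1) * real (n choose (n - i + 1)) * hyp_bernoulli (Suc M) i)"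
    unfolding S_def sum_distrib_left
  proof (rule sum.cong)
    fix i assume "i \<in> {1..<n}"
    then have i: "1 \<le> i" "i \<le> n" and "n + 1 - i = n - i + 1" by auto
    then have "fact n * (real i * G $ i * H $ (n + 1 - i)) =
        (fact n * real i) * G $ i * H $ (n - i + 1)"
      by (simp only: mult.assoc)
    also have "\<dots> = fact (n - i + 1) * H $ (n - i + 1) * real (n choose (n - i + 1)) * (fact i * G $ i)"
      unfolding fact_mult_eq_fact_choose[OF i] by (simp only: mult_ac)
    finally show "fact n * (real i * G $ i * H $ (n + 1 - i)) =
        hyp_bernoulli M (n - i + 1) * real (n choose (n - i + 1)) * hyp_bernoulli (Suc M) i"
      by (simp add: hyp_bernoulli_def G_def H_def)
  qed simp
  have rec: "(real (Suc M) + real n) * G $ n = real (Suc M) * H $ n + real (Suc M) * S"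
    unfolding G_def H_def S_def by (rule hb_gf_nth_rec)
  have "hyp_bernoulli (Suc M) n = fact n * ((real (Suc M) + real n) * G $ n) / (real (Suc M) + real n)"
    by (simp add: hyp_bernoulli_def G_def del: of_nat_Suc)
  also have "\<dots> = real (Suc M) / real (Suc M + n) * (fact n * H $ n + fact n * S)"
    unfolding rec by (simp add: field_simps del: of_nat_Suc)
  finally show ?thesis
    unfolding sum by (simp add: hyp_bernoulli_def H_def)
qed

lemma chains_bound:
  assumes "i \<in> chains n m" "k \<le> m"
  shows "i k + k \<le> n"
  using assms(2)
proof (induction k)
  case 0
  then show ?case using assms(1) by (simp add: chains_def)
next
  case (Suc k)
  then have "i (Suc k) < i k" using assms(1) by (simp add: chains_def)
  then show ?case using Suc by simp
qed

lemma chains_pos: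
  assumes "i \<in> chains n m" "k \<le> m"
  shows "1 \<le> i k"
  using assms(2)
proof (induction k rule: inc_induct)
  case base
  then show ?case using assms(1) by (simp add: chains_def)
next
  case (step k)
  then have "i (Suc k) < i k" using assms(1) by (simp add: chains_def)
  then show ?case using step by simp
qed

lemma chains_empty: "n \<le> m \<Longrightarrow> chains n m = {}"
proof -
  have "m < n" if "i \<in> chains n m" for i
    using chains_bound[OF that, of m] chains_pos[OF that, of m] by simp
  then show "n \<le> m \<Longrightarrow> chains n m = {}"
    by fastforce
qed

lemma finite_chains: "finite (chains n m)"
proof (rule finite_subset)
  show "chains n m \<subseteq> {f. \<forall>x. (x \<in> {..m} \<longrightarrow> f x \<in> {..n}) \<and> (x \<notin> {..m} \<longrightarrow> f x = 0)}"
    using chains_bound by (auto simp: chains_def) (metis add_leE)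
  show "finite {f. \<forall>x. (x \<in> {..m} \<longrightarrow> f x \<in> {..n}) \<and> (x \<notin> {..m} \<longrightarrow> (f x :: nat) = 0)}"
    by (rule finite_set_of_finite_funs) simp_all
qed

lemma chains_0: "1 \<le> n \<Longrightarrow> chains n 0 = {\<lambda>k. if k = 0 then n else 0}"
  by (auto simp: chains_def fun_eq_iff)

definition chain_cons :: "nat \<Rightarrow> (nat \<Rightarrow> nat) \<Rightarrow> nat \<Rightarrow> nat" where
  "chain_cons n i = (\<lambda>k. if k = 0 then n else i (k - 1))"

lemma chain_cons_0 [simp]: "chain_cons n i 0 = n"
  and chain_cons_Suc [simp]: "chain_cons n i (Suc k) = i k"
  by (simp_all add: chain_cons_def)

lemma bij_betw_chain_cons:
  "bij_betw (\<lambda>(j, i). chain_cons n i) (SIGMA j:{1..<n}. chains j m) (chains n (Suc m))"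
proof (rule bij_betw_byWitness[where f' = "\<lambda>a. (a 1, \<lambda>k. a (Suc k))"], goal_cases)
  case 1
  show ?case by (auto simp: chain_cons_def chains_def fun_eq_iff)
next
  case 2
  show ?case by (auto simp: chain_cons_def chains_def fun_eq_iff)
next
  case 3
  show ?case
  proof clarify
    fix j i assume j: "j \<in> {1..<n}" and i: "i \<in> chains j m"
    have "chain_cons n i (Suc k) < chain_cons n i k" if "k < Suc m" for k
      using that i j by (cases k) (auto simp: chain_cons_def chains_def)
    moreover have "1 \<le> chain_cons n i (Suc m)"
      using chains_pos[OF i, of m] by (simp add: chain_cons_def)
    ultimately show "chain_cons n i \<in> chains n (Suc m)"
      using i by (auto simp: chains_def chain_cons_def)
  qed
next
  case 4
  show ?case
    using chains_pos[of _ n "Suc m" 1] by (auto simp: chains_def)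
qed

definition chain_weight :: "(nat \<Rightarrow> nat \<Rightarrow> 'a::comm_semiring_1) \<Rightarrow> (nat \<Rightarrow> 'a) \<Rightarrow> nat \<Rightarrow> (nat \<Rightarrow> nat) \<Rightarrow> 'a" where
  "chain_weight w b m i = b (i m) * (\<Prod>k=1..m. w (i (k - 1)) (i k))"

definition chain_sum :: "(nat \<Rightarrow> nat \<Rightarrow> 'a::comm_semiring_1) \<Rightarrow> (nat \<Rightarrow> 'a) \<Rightarrow> nat \<Rightarrow> nat \<Rightarrow> 'a" where
  "chain_sum w b n m = (\<Sum>i\<in>chains n m. chain_weight w b m i)"

lemma chain_weight_chain_cons:
  "chain_weight w b (Suc m) (chain_cons n i) = w n (i 0) * chain_weight w b m i"
proof -
  let ?c = "chain_cons n i"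
  have "(\<Prod>k=1..Suc m. w (?c (k - 1)) (?c k)) = w n (i 0) * (\<Prod>k=Suc 1..Suc m. w (?c (k - 1)) (?c k))"
    by (simp add: prod.atLeast_Suc_atMost del: prod.cl_ivl_Suc)
  also have "(\<Prod>k=Suc 1..Suc m. w (?c (k - 1)) (?c k)) = (\<Prod>k=1..m. w (?c k) (?c (Suc k)))"
    by (simp only: prod.shift_bounds_cl_Suc_ivl diff_Suc_1)
  also have "\<dots> = (\<Prod>k=1..m. w (i (k - 1)) (i k))"
    by (rule prod.cong) (auto simp: chain_cons_def)
  finally show ?thesis
    unfolding chain_weight_def chain_cons_Suc by (simp only: mult_ac)
qed

lemma chain_sum_0: "1 \<le> n \<Longrightarrow> chain_sum w b n 0 = b n"
  by (simp add: chain_sum_def chain_weight_def chains_0)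

lemma chain_sum_eq_0: "n \<le> m \<Longrightarrow> chain_sum w b n m = 0"
  by (simp add: chain_sum_def chains_empty)

lemma chain_sum_Suc: "chain_sum w b n (Suc m) = (\<Sum>j\<in>{1..<n}. w n j * chain_sum w b j m)"
proof -
  have "chain_sum w b n (Suc m) = (\<Sum>(j, i)\<in>(SIGMA j:{1..<n}. chains j m). chain_weight w b (Suc m) (chain_cons n i))"
    unfolding chain_sum_def using sum.reindex_bij_betw[OF bij_betw_chain_cons, symmetric]
    by (simp add: case_prod_unfold)
  also have "\<dots> = (\<Sum>(j, i)\<in>(SIGMA j:{1..<n}. chains j m). w n j * chain_weight w b m i)"
    by (rule sum.cong) (auto simp: chain_weight_chain_cons chains_def)
  also have "\<dots> = (\<Sum>j\<in>{1..<n}. w n j * chain_sum w b j m)"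
    by (simp add: sum.Sigma[symmetric] finite_chains chain_sum_def sum_distrib_left)
  finally show ?thesis .
qed

lemma recurrence_eq_chain_sum:
  fixes f :: "nat \<Rightarrow> 'a::comm_semiring_1"
  assumes rec: "\<And>n. 1 \<le> n \<Longrightarrow> f n = b n + (\<Sum>j\<in>{1..<n}. w n j * f j)"
  shows "1 \<le> n \<Longrightarrow> f n = (\<Sum>m=0..n-1. chain_sum w b n m)"
proof (induction n rule: less_induct)
  case (less n)
  then obtain p where n: "n = Suc p" by (cases n) auto
  have IH: "f j = (\<Sum>m<p. chain_sum w b j m)" if "j \<in> {1..<n}" for j
  proof -
    have "f j = (\<Sum>m<j. chain_sum w b j m)"
      using that less.IH[of j] by (auto simp: atLeast0AtMost lessThan_Suc_atMost[symmetric])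
    also have "\<dots> = (\<Sum>m<p. chain_sum w b j m)"
      using that n by (intro sum.mono_neutral_left) (auto simp: chain_sum_eq_0)
    finally show ?thesis .
  qed
  have "f n = b n + (\<Sum>j\<in>{1..<n}. w n j * (\<Sum>m<p. chain_sum w b j m))"
    using rec[OF less.prems] IH by simp
  also have "\<dots> = chain_sum w b n 0 + (\<Sum>m<p. \<Sum>j\<in>{1..<n}. w n j * chain_sum w b j m)"
    unfolding sum_distrib_left chain_sum_0[OF less.prems] by (subst sum.swap) (rule refl)
  also have "\<dots> = chain_sum w b n 0 + (\<Sum>m<p. chain_sum w b n (Suc m))"
    by (simp only: chain_sum_Suc)
  also have "\<dots> = (\<Sum>m<Suc p. chain_sum w b n m)"
    by (rule sum.lessThan_Suc_shift[symmetric])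
  also have "\<dots> = (\<Sum>m=0..n-1. chain_sum w b n m)"
    by (simp add: n atLeast0AtMost lessThan_Suc_atMost)
  finally show ?case .
qed

theorem proposition5:
  fixes N n :: nat
  assumes "N \<ge> 2" and "n \<ge> 1"
  shows "hyp_bernoulli N n =
    real N / real (N + n) *
    (\<Sum>m=0..n-1. \<Sum>i\<in>chains n m.
        hyp_bernoulli (N - 1) (i m) *
        (\<Prod>k=1..m. hyp_bernoulli (N - 1) (i (k - 1) - i k + 1) *
                    real (i (k - 1) choose (i (k - 1) - i k + 1)) *
                    (real N / real (N + i k))))"
proof -
  have N_eq: "Suc (N - 1) = N" and "real N > 0"
    using assms(1) by simp_all
  define w where "w a c = hyp_bernoulli (N - 1) (a - c + 1) * real (a choose (a - c + 1)) * (real N / real (N + c))" for a c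
  define f where "f k = real (N + k) / real N * hyp_bernoulli N k" for k
  have B: "hyp_bernoulli N k = real N / real (N + k) * f k" for k
    using \<open>real N > 0\<close> by (simp add: f_def)
  have "w k j * f j = hyp_bernoulli (N - 1) (k - j + 1) * real (k choose (k - j + 1)) * hyp_bernoulli N j" for k j
    using \<open>real N > 0\<close> by (simp add: w_def f_def)
  moreover have "f k = hyp_bernoulli (N - 1) k + (\<Sum>j\<in>{1..<k}.
      hyp_bernoulli (N - 1) (k - j + 1) * real (k choose (k - j + 1)) * hyp_bernoulli N j)" for k
    unfolding f_def using \<open>real N > 0\<close>
    by (subst hyp_bernoulli_rec[of "N - 1" k, unfolded N_eq]) simp
  ultimately have "f k = hyp_bernoulli (N - 1) k + (\<Sum>j\<in>{1..<k}. w k j * f j)" for k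
    by simp
  then have "f n = (\<Sum>m=0..n-1. chain_sum w (hyp_bernoulli (N - 1)) n m)"
    using recurrence_eq_chain_sum assms(2) by blast
  then show ?thesis
    unfolding B chain_sum_def chain_weight_def w_def by simp
qed

end
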